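(* Let $f(t)$ be a solution of the kinetic Kuramoto model for non-identical oscillators with coupling $K>0$, whose initial datum $f_0$ is absolutely continuous with respect to Lebesgue measure on $\mathcal T\times\mathbb R$ with $\int f_0|\ln f_0|<\infty$. Then $f(t)$ is absolutely continuous for all $t$ and $$\frac{d}{dt}\int_{\mathcal T\times\mathbb R}f(t,\vartheta,\omega)\ln f(t,\vartheta,\omega)\,d\vartheta\,d\omega=K R(t)^2;$$ in particular this quantity is non-decreasing in $t$.
   Context: Kinetic Kuramoto model for non-identical oscillators: $f(t)$ is a probability density on $\mathcal T\times\mathbb R$ ($\mathcal T=\mathbb R/2\pi\mathbb Z$) weakly solving $\partial_t f+\partial_\vartheta(vf)=0$, $v(t,\vartheta,\omega)=\omega-K\int\sin(\vartheta-\vartheta')f(t,\vartheta',\omega')d\vartheta'd\omega'$, i.e. $f(t)$ is the push-forward of $f_0$ along characteristics $\dot\Theta=\omega-KR(t)\sin(\Theta-\varphi(t))$, $\Theta(0,\vartheta,\omega)=\vartheta$, where $R(t)e^{\mathrm{i}\varphi(t)}=\int e^{\mathrm{i}\vartheta}f(t,\vartheta,\omega)d\vartheta d\omega$. *)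

theory Defs
  imports "HOL-Analysis.Analysis"
begin

text \<open>The circle T = R/2piZ is represented by the fundamental domain [0,2pi);
  phase space T x R is represented by the strip below, with Lebesgue measure
  (lborel on real x real restricted to the strip).\<close>

definition Tstrip :: "(real \<times> real) set" where
  "Tstrip = {0..<2*pi} \<times> UNIV"

definition wrap :: "real \<Rightarrow> real" where
  "wrap x = x - 2 * pi * of_int \<lfloor>x / (2 * pi)\<rfloor>"

definition order_param :: "(real \<times> real) measure \<Rightarrow> real" where
  "order_param \<mu> = cmod (\<integral> y. cis (fst y) \<partial>\<mu>)"

definition entropy :: "(real \<times> real \<Rightarrow> real) \<Rightarrow> real" where
  "entropy g = (\<integral> x. g x * ln (g x) \<partial>lborel)"

end

theory Submission
  imports Defs
begin

(* The characteristic velocity  omega - K * integral sin (z - theta') d(mu t)  depends on mu t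
   only through the order parameter (Rcos t, Rsin t), so the characteristic ODE is a scalar ODE
   whose right-hand side vel t z omega is (2K)-Lipschitz in z.  Uniqueness for such ODEs
   (Gronwall) shows that Theta t _ omega is an increasing bijection of the line commuting with
   shifts by 2pi.  A difference-quotient argument proves Liouville's formula: the angular
   derivative of the flow is jac = exp log_jac, where log_jac is the time integral of
   d vel / dz along the characteristic.  Substituting y = Theta t theta omega on each fibre and
   using periodicity, mu t has the density  dens t = f0(inverse flow) / jac  on the strip, and
   ln (dens t) composed with the flow equals ln f0 - log_jac.  Hence
   entropy (dens t) = entropy f0 - (integral of f0 * log_jac), and differentiating under the
   integral gives the rate -(integral of f0 * d vel/dz) = K (Rcos^2 + Rsin^2) = K R^2. *)

lemma mean_value_bound:
  fixes f f' :: "real \<Rightarrow> real"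
  assumes deriv: "\<And>z. (f has_real_derivative f' z) (at z)"
    and bound: "\<And>z. min a b \<le> z \<Longrightarrow> z \<le> max a b \<Longrightarrow> \<bar>f' z\<bar> \<le> B"
  shows "\<bar>f b - f a\<bar> \<le> B * \<bar>b - a\<bar>"
  using field_differentiable_bound[of "{min a b..max a b}" f f' B b a]
    has_field_derivative_at_within[OF deriv] bound by auto

text \<open>Uniqueness for a scalar ODE whose right-hand side is Lipschitz in the state, forward in
  time: exp(-2Ls) (u - v)^2 is non-increasing.\<close>
lemma ode_unique_forward:
  fixes u v :: "real \<Rightarrow> real" and G :: "real \<Rightarrow> real \<Rightarrow> real"
  assumes du: "\<And>s. (u has_real_derivative G s (u s)) (at s)"
    and dv: "\<And>s. (v has_real_derivative G s (v s)) (at s)"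
    and lip: "\<And>s x y. \<bar>G s x - G s y\<bar> \<le> L * \<bar>x - y\<bar>"
    and eq: "u t0 = v t0" and "t0 \<le> t"
  shows "u t = v t"
proof -
  define w where "w s = (u s - v s)\<^sup>2" for s
  define p where "p s = exp (- (2 * L) * s) * w s" for s
  have growth: "(u s - v s) * (G s (u s) - G s (v s)) \<le> L * w s" for s
  proof -
    have "(u s - v s) * (G s (u s) - G s (v s)) \<le> \<bar>u s - v s\<bar> * \<bar>G s (u s) - G s (v s)\<bar>"
      by (metis abs_ge_self abs_mult)
    also have "\<dots> \<le> \<bar>u s - v s\<bar> * (L * \<bar>u s - v s\<bar>)"
      by (intro mult_left_mono lip) auto
    finally show ?thesis by (simp add: w_def power2_eq_square abs_mult_self_eq algebra_simps)
  qed
  have "p t \<le> p t0"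
  proof (rule DERIV_nonpos_imp_nonincreasing[OF \<open>t0 \<le> t\<close>])
    fix s
    have "(p has_real_derivative exp (- (2 * L) * s) * (2 * ((u s - v s) * (G s (u s) - G s (v s)) - L * w s))) (at s)"
      unfolding p_def w_def by (auto intro!: derivative_eq_intros du dv simp: algebra_simps)
    moreover have "exp (- (2 * L) * s) * (2 * ((u s - v s) * (G s (u s) - G s (v s)) - L * w s)) \<le> 0"
      using growth[of s] by (intro mult_nonneg_nonpos) auto
    ultimately show "\<exists>y. (p has_real_derivative y) (at s) \<and> y \<le> 0" by blast
  qed
  then have "w t \<le> 0" using eq by (simp add: p_def w_def mult_le_0_iff)
  then show ?thesis by (simp add: w_def)
qed

text \<open>Uniqueness in both time directions; backwards in time it follows from the forward case
  applied to the time-reversed solutions.\<close>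
lemma ode_unique:
  fixes u v :: "real \<Rightarrow> real" and G :: "real \<Rightarrow> real \<Rightarrow> real"
  assumes du: "\<And>s. (u has_real_derivative G s (u s)) (at s)"
    and dv: "\<And>s. (v has_real_derivative G s (v s)) (at s)"
    and lip: "\<And>s x y. \<bar>G s x - G s y\<bar> \<le> L * \<bar>x - y\<bar>"
    and eq: "u t0 = v t0"
  shows "u t = v t"
proof (cases "t0 \<le> t")
  case True
  then show ?thesis using ode_unique_forward[OF du dv lip eq] by blast
next
  case False
  have rev: "((\<lambda>s. y (- s)) has_real_derivative - G (- s) (y (- s))) (at s)"
    if "\<And>s. (y has_real_derivative G s (y s)) (at s)" for y :: "real \<Rightarrow> real" and s
    using DERIV_chain2[OF that[of "- s"] DERIV_minus[OF DERIV_ident]] by simp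
  have "(\<lambda>s. u (- s)) (- t) = (\<lambda>s. v (- s)) (- t)"
    by (rule ode_unique_forward[of _ "\<lambda>s x. - G (- s) x" _ L "- t0"])
       (use rev[OF du] rev[OF dv] lip eq False in \<open>auto simp: abs_minus_commute\<close>)
  then show ?thesis by simp
qed

lemma DERIV_integral_dominated:
  fixes F F' :: "real \<Rightarrow> 'a \<Rightarrow> real"
  assumes meas: "\<And>s. F s \<in> borel_measurable M" "F' t \<in> borel_measurable M"
    and int: "\<And>s. integrable M (F s)"
    and deriv: "\<And>x s. x \<in> space M \<Longrightarrow> ((\<lambda>s. F s x) has_real_derivative F' s x) (at s)"
    and bound: "\<And>x s. x \<in> space M \<Longrightarrow> \<bar>F' s x\<bar> \<le> w x"
    and w: "integrable M w"
  shows "((\<lambda>s. \<integral>x. F s x \<partial>M) has_real_derivative (\<integral>x. F' t x \<partial>M)) (at t)"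
  unfolding DERIV_def tendsto_at_iff_sequentially comp_def
proof (intro allI impI)
  fix X :: "nat \<Rightarrow> real" assume X0: "\<forall>i. X i \<in> UNIV - {0}" and X: "X \<longlonglongrightarrow> 0"
  define Q where "Q i x = (F (t + X i) x - F t x) / X i" for i x
  have quotient: "((\<integral>x. F (t + X i) x \<partial>M) - (\<integral>x. F t x \<partial>M)) / X i = (\<integral>x. Q i x \<partial>M)" for i
  proof -
    have "(\<integral>x. F (t + X i) x \<partial>M) - (\<integral>x. F t x \<partial>M) = (\<integral>x. F (t + X i) x - F t x \<partial>M)"
      by (rule Bochner_Integration.integral_diff[symmetric]) (fact int)+
    then show ?thesis by (simp add: Q_def)
  qed
  have "(\<lambda>i. \<integral>x. Q i x \<partial>M) \<longlonglongrightarrow> (\<integral>x. F' t x \<partial>M)"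
  proof (rule integral_dominated_convergence[where w = w])
    show "Q i \<in> borel_measurable M" for i
      unfolding Q_def[abs_def] by (intro borel_measurable_divide borel_measurable_diff meas(1) borel_measurable_const)
    show "F' t \<in> borel_measurable M" "integrable M w" by (fact meas(2), fact w)
    show "AE x in M. (\<lambda>i. Q i x) \<longlonglongrightarrow> F' t x"
    proof (rule AE_I2)
      fix x assume x: "x \<in> space M"
      have "((\<lambda>h. (F (t + h) x - F t x) / h) \<longlongrightarrow> F' t x) (at 0)"
        using deriv[OF x, of t] unfolding DERIV_def .
      then show "(\<lambda>i. Q i x) \<longlonglongrightarrow> F' t x"
        using X0 X unfolding tendsto_at_iff_sequentially comp_def Q_def by auto
    qed
    show "AE x in M. norm (Q i x) \<le> w x" for i
    proof (rule AE_I2)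
      fix x assume x: "x \<in> space M"
      have "\<bar>F (t + X i) x - F t x\<bar> \<le> w x * \<bar>(t + X i) - t\<bar>"
        by (rule mean_value_bound[OF deriv[OF x]]) (rule bound[OF x])
      then show "norm (Q i x) \<le> w x"
        using X0 by (simp add: Q_def abs_divide pos_divide_le_eq)
    qed
  qed
  then show "(\<lambda>i. ((\<integral>x. F (t + X i) x \<partial>M) - (\<integral>x. F t x \<partial>M)) / X i) \<longlonglongrightarrow> (\<integral>x. F' t x \<partial>M)"
    unfolding quotient .
qed

lemma periodic_shift_int:
  fixes G :: "real \<Rightarrow> 'a"
  assumes per: "\<And>x. G (x + c) = G x"
  shows "G (x + of_int k * c) = G x"
proof -
  have nat_shift: "G (y + real n * c) = G y" for y n
  proof (induction n)
    case (Suc n)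
    have "G (y + real (Suc n) * c) = G ((y + real n * c) + c)" by (simp add: algebra_simps)
    then show ?case using Suc per by simp
  qed simp
  show ?thesis
  proof (cases "k \<ge> 0")
    case True then show ?thesis using nat_shift[of x "nat k"] by simp
  next
    case False
    have "G (x + of_int k * c) = G ((x + of_int k * c) + real (nat (-k)) * c)" using nat_shift by metis
    also have "(x + of_int k * c) + real (nat (-k)) * c = x" using False by (simp add: algebra_simps)
    finally show ?thesis .
  qed
qed

lemma sin_shift_2pi_int: "sin (x + 2 * pi * of_int k) = sin x"
  using periodic_shift_int[of sin "2 * pi" x k] sin_periodic by (simp add: mult.commute)

lemma cos_shift_2pi_int: "cos (x + 2 * pi * of_int k) = cos x"
  using periodic_shift_int[of cos "2 * pi" x k] cos_periodic by (simp add: mult.commute)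

lemma nn_integral_periodic_window:
  fixes G :: "real \<Rightarrow> ennreal"
  assumes c: "c > 0" and [measurable]: "G \<in> borel_measurable borel"
    and per: "\<And>x. G (x + c) = G x"
  shows "(\<integral>\<^sup>+x. G x * indicator {a..<a+c} x \<partial>lborel) = (\<integral>\<^sup>+x. G x * indicator {0..<c} x \<partial>lborel)"
proof -
  have shift: "(\<integral>\<^sup>+x. F x \<partial>lborel) = (\<integral>\<^sup>+x. F (d + x) \<partial>lborel)"
    if "F \<in> borel_measurable borel" for F :: "real \<Rightarrow> ennreal" and d
    using nn_integral_real_affine[of F 1 d] that by simp
  define k where "k = \<lfloor>a / c\<rfloor>"
  define r where "r = a - of_int k * c"
  have r: "0 \<le> r" "r < c"
    using floor_divide_lower[OF c, of a] floor_divide_upper[OF c, of a]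
    by (auto simp: r_def k_def algebra_simps)
  have "(\<integral>\<^sup>+x. G x * indicator {a..<a+c} x \<partial>lborel)
      = (\<integral>\<^sup>+x. G (of_int k * c + x) * indicator {a..<a+c} (of_int k * c + x) \<partial>lborel)"
    by (rule shift) measurable
  also have "\<dots> = (\<integral>\<^sup>+x. G x * indicator {r..<c} x + G x * indicator {c..<r+c} x \<partial>lborel)"
    by (intro nn_integral_cong)
       (use r in \<open>auto simp: periodic_shift_int[where G=G, OF per] add.commute r_def indicator_def\<close>)
  also have "\<dots> = (\<integral>\<^sup>+x. G x * indicator {r..<c} x \<partial>lborel) + (\<integral>\<^sup>+x. G x * indicator {c..<r+c} x \<partial>lborel)"
    by (rule nn_integral_add) measurable
  also have "(\<integral>\<^sup>+x. G x * indicator {c..<r+c} x \<partial>lborel) = (\<integral>\<^sup>+x. G (c + x) * indicator {c..<r+c} (c + x) \<partial>lborel)"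
    by (rule shift) measurable
  also have "\<dots> = (\<integral>\<^sup>+x. G x * indicator {0..<r} x \<partial>lborel)"
    by (intro nn_integral_cong) (auto simp: per add.commute indicator_def)
  also have "(\<integral>\<^sup>+x. G x * indicator {r..<c} x \<partial>lborel) + (\<integral>\<^sup>+x. G x * indicator {0..<r} x \<partial>lborel)
      = (\<integral>\<^sup>+x. G x * indicator {r..<c} x + G x * indicator {0..<r} x \<partial>lborel)"
    by (rule nn_integral_add[symmetric]) measurable
  also have "\<dots> = (\<integral>\<^sup>+x. G x * indicator {0..<c} x \<partial>lborel)"
    by (intro nn_integral_cong) (use r in \<open>auto simp: indicator_def\<close>)
  finally show ?thesis .
qed

lemma distr_density_substitution:
  fixes u u' :: "real \<Rightarrow> real"
  assumes du: "\<And>x. (u has_real_derivative u' x) (at x)"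
    and cu': "continuous_on UNIV u'"
    and nn: "\<And>x. u' x \<ge> 0"
    and ab: "a \<le> b"
  shows "density lborel (indicator {u a..u b})
       = distr (density lborel (\<lambda>x. ennreal (u' x) * indicator {a..b} x)) lborel u"
proof -
  have "continuous_on UNIV u"
    using du by (intro continuous_at_imp_continuous_on) (auto intro: DERIV_isCont)
  then have [measurable]: "u \<in> borel_measurable borel" "u' \<in> borel_measurable borel"
    using cu' by (auto intro: borel_measurable_continuous_onI)
  show ?thesis
  proof (rule measure_eqI)
    fix A assume "A \<in> sets (density lborel (indicator {u a..u b}))"
    then have [measurable]: "A \<in> sets borel" by simp
    have "emeasure (density lborel (indicator {u a..u b})) A
        = (\<integral>\<^sup>+y. ennreal (indicator A y * indicator {u a..u b} y) \<partial>lborel)"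
      by (subst emeasure_density) (auto intro!: nn_integral_cong simp: indicator_def)
    also have "\<dots> = (\<integral>\<^sup>+x. ennreal (indicator A (u x) * u' x * indicator {a..b} x) \<partial>lborel)"
      by (rule nn_integral_substitution[where f = "indicator A"])
         (use du cu' nn ab in \<open>auto intro: continuous_on_subset simp: set_borel_measurable_def\<close>)
    also have "\<dots> = (\<integral>\<^sup>+x. (ennreal (u' x) * indicator {a..b} x) * indicator (u -` A \<inter> space lborel) x \<partial>lborel)"
      by (intro nn_integral_cong) (auto simp: indicator_def)
    also have "\<dots> = emeasure (distr (density lborel (\<lambda>x. ennreal (u' x) * indicator {a..b} x)) lborel u) A"
      by (subst emeasure_distr, simp_all, subst emeasure_density)
         (use measurable_sets[of u borel borel A] in auto)
    finally show "emeasure (density lborel (indicator {u a..u b})) A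
        = emeasure (distr (density lborel (\<lambda>x. ennreal (u' x) * indicator {a..b} x)) lborel u) A" .
  qed simp
qed

text \<open>The same substitution for non-negative integrands with values in ennreal (the library
  version is stated for real-valued integrands).\<close>
lemma nn_integral_substitution_interval:
  fixes u u' :: "real \<Rightarrow> real" and G :: "real \<Rightarrow> ennreal"
  assumes du: "\<And>x. (u has_real_derivative u' x) (at x)"
    and cu': "continuous_on UNIV u'"
    and nn: "\<And>x. u' x \<ge> 0"
    and ab: "a \<le> b"
    and [measurable]: "G \<in> borel_measurable borel"
  shows "(\<integral>\<^sup>+y. G y * indicator {u a..u b} y \<partial>lborel)
       = (\<integral>\<^sup>+x. G (u x) * ennreal (u' x) * indicator {a..b} x \<partial>lborel)"
proof -
  have "continuous_on UNIV u"
    using du by (intro continuous_at_imp_continuous_on) (auto intro: DERIV_isCont)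
  then have [measurable]: "u \<in> borel_measurable borel" "u' \<in> borel_measurable borel"
    using cu' by (auto intro: borel_measurable_continuous_onI)
  have "(\<integral>\<^sup>+y. G y * indicator {u a..u b} y \<partial>lborel) = (\<integral>\<^sup>+y. G y \<partial>density lborel (indicator {u a..u b}))"
    by (subst nn_integral_density) (auto simp: mult.commute)
  also have "\<dots> = (\<integral>\<^sup>+y. G y \<partial>distr (density lborel (\<lambda>x. ennreal (u' x) * indicator {a..b} x)) lborel u)"
    by (simp add: distr_density_substitution[OF du cu' nn ab])
  also have "\<dots> = (\<integral>\<^sup>+x. G (u x) * ennreal (u' x) * indicator {a..b} x \<partial>lborel)"
    by (subst nn_integral_distr, simp_all, subst nn_integral_density) (auto simp: ac_simps)
  finally show ?thesis .
qed

text \<open>Borel sets of the plane are the product Borel sets; this lets the measurability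
  prover work with the product sigma algebra.\<close>
lemma measurable_pair_borel_dom:
  "measurable (borel :: (real \<times> real) measure) N = measurable (borel \<Otimes>\<^sub>M borel) N"
  by (rule measurable_cong_sets) (simp_all add: borel_prod[symmetric])

lemma measurable_pair_borel_cod:
  "measurable M (borel :: (real \<times> real) measure) = measurable M (borel \<Otimes>\<^sub>M borel)"
  by (rule measurable_cong_sets) (simp_all add: borel_prod[symmetric])

lemma measurable_uncurry_compose:
  assumes "(\<lambda>x. F (fst x) (snd x)) \<in> borel_measurable (borel \<Otimes>\<^sub>M borel)"
    and "g1 \<in> borel_measurable N" "g2 \<in> borel_measurable N"
  shows "(\<lambda>x. F (g1 x) (g2 x)) \<in> borel_measurable N"
proof -
  have "(\<lambda>x. (g1 x, g2 x)) \<in> measurable N (borel \<Otimes>\<^sub>M borel)"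
    using assms(2,3) by (rule measurable_Pair)
  from measurable_compose[OF this assms(1)] show ?thesis by simp
qed

lemma Tstrip_iff: "(a, b) \<in> Tstrip \<longleftrightarrow> 0 \<le> a \<and> a < 2 * pi"
  by (simp add: Tstrip_def)

lemma Tstrip_sets[measurable]: "Tstrip \<in> sets (borel \<Otimes>\<^sub>M borel)"
  unfolding Tstrip_def by (rule pair_measureI) auto

lemma wrap_meas[measurable]: "wrap \<in> borel_measurable borel"
  unfolding wrap_def by measurable

lemma wrap_eq: "\<exists>k::int. wrap x = x + 2 * pi * of_int k"
  unfolding wrap_def by (rule exI[of _ "- \<lfloor>x / (2 * pi)\<rfloor>"]) simp

lemma wrap_range: "0 \<le> wrap x" "wrap x < 2 * pi"
  using floor_divide_lower[of "2 * pi" x] floor_divide_upper[of "2 * pi" x]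
  by (auto simp: wrap_def algebra_simps)

lemma wrap_id: "0 \<le> x \<Longrightarrow> x < 2 * pi \<Longrightarrow> wrap x = x"
proof -
  assume "0 \<le> x" "x < 2 * pi"
  then have "0 \<le> x / (2 * pi)" "x / (2 * pi) < 1" using pi_gt_zero by (auto simp: field_simps)
  then have "\<lfloor>x / (2 * pi)\<rfloor> = 0" by linarith
  then show ?thesis by (simp add: wrap_def)
qed

lemma wrap_shift: "wrap (x + 2 * pi * of_int k) = wrap x"
proof -
  have "(x + 2 * pi * of_int k) / (2 * pi) = x / (2 * pi) + of_int k" using pi_gt_zero by (simp add: field_simps)
  then have "\<lfloor>(x + 2 * pi * of_int k) / (2 * pi)\<rfloor> = \<lfloor>x / (2 * pi)\<rfloor> + k" by simp
  then show ?thesis unfolding wrap_def by (simp add: algebra_simps)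
qed

lemma sin_wrap[simp]: "sin (wrap x) = sin x"
  using wrap_eq[of x] sin_shift_2pi_int by metis

lemma cos_wrap[simp]: "cos (wrap x) = cos x"
  using wrap_eq[of x] cos_shift_2pi_int by metis

section \<open>The Kuramoto characteristic flow\<close>

locale kuramoto_flow =
  fixes K :: real
    and f0 :: "real \<times> real \<Rightarrow> real"
    and \<Theta> :: "real \<Rightarrow> real \<Rightarrow> real \<Rightarrow> real"
    and \<mu> :: "real \<Rightarrow> (real \<times> real) measure"
  assumes K_pos: "K > 0"
    and f0_meas: "f0 \<in> borel_measurable lborel"
    and f0_nonneg: "\<And>x. f0 x \<ge> 0"
    and f0_supp: "\<And>x. x \<notin> Tstrip \<Longrightarrow> f0 x = 0"
    and f0_int: "integrable lborel f0"
    and f0_prob: "(\<integral> x. f0 x \<partial>lborel) = 1"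
    and f0_entropy: "integrable lborel (\<lambda>x. f0 x * \<bar>ln (f0 x)\<bar>)"
    and \<Theta>_meas: "\<And>t. (\<lambda>x. \<Theta> t (fst x) (snd x)) \<in> borel_measurable lborel"
    and \<mu>_def: "\<And>t. \<mu> t = distr (density lborel (\<lambda>x. ennreal (f0 x))) lborel
                         (\<lambda>x. (wrap (\<Theta> t (fst x) (snd x)), snd x))"
    and \<Theta>_init: "\<And>\<theta> \<omega>. \<Theta> 0 \<theta> \<omega> = \<theta>"
    and \<Theta>_ode: "\<And>t \<theta> \<omega>. ((\<lambda>s. \<Theta> s \<theta> \<omega>) has_real_derivative
                   (\<omega> - K * (\<integral> y. sin (\<Theta> t \<theta> \<omega> - fst y) \<partial>\<mu> t))) (at t)"
begin

lemma f0_meas_pair[measurable]: "f0 \<in> borel_measurable (borel \<Otimes>\<^sub>M borel)"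
  using f0_meas by (simp add: measurable_pair_borel_dom[symmetric])

lemma \<Theta>_meas_comp[measurable]:
  "g1 \<in> borel_measurable N \<Longrightarrow> g2 \<in> borel_measurable N \<Longrightarrow> (\<lambda>x. \<Theta> t (g1 x) (g2 x)) \<in> borel_measurable N"
  by (rule measurable_uncurry_compose) (use \<Theta>_meas[of t] in \<open>simp_all add: measurable_pair_borel_dom[symmetric]\<close>)

definition flow_map :: "real \<Rightarrow> real \<times> real \<Rightarrow> real \<times> real" where
  "flow_map t x = (wrap (\<Theta> t (fst x) (snd x)), snd x)"

lemma flow_map_meas: "flow_map t \<in> measurable lborel lborel"
  unfolding measurable_lborel1 measurable_lborel2 measurable_pair_borel_dom measurable_pair_borel_cod
    flow_map_def by measurable

lemma \<mu>_flow_map: "\<mu> t = distr (density lborel (\<lambda>x. ennreal (f0 x))) lborel (flow_map t)"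
  unfolding \<mu>_def flow_map_def[abs_def] ..

lemma integral_mu:
  fixes g :: "real \<times> real \<Rightarrow> 'b::{banach, second_countable_topology}"
  assumes "g \<in> borel_measurable lborel"
  shows "integral\<^sup>L (\<mu> t) g = (\<integral>x. f0 x *\<^sub>R g (flow_map t x) \<partial>lborel)"
proof -
  have "integral\<^sup>L (\<mu> t) g = integral\<^sup>L (density lborel (\<lambda>x. ennreal (f0 x))) (\<lambda>x. g (flow_map t x))"
    unfolding \<mu>_flow_map using flow_map_meas[of t] assms by (subst integral_distr) auto
  also have "\<dots> = (\<integral>x. f0 x *\<^sub>R g (flow_map t x) \<partial>lborel)"
    using flow_map_meas[of t] assms f0_meas f0_nonneg by (subst integral_density) auto
  finally show ?thesis .
qed

lemma integrable_f0_bounded: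
  fixes h :: "real \<Rightarrow> 'b::{banach, second_countable_topology}"
  assumes [measurable]: "h \<in> borel_measurable borel" and bound: "\<And>z. norm (h z) \<le> 1"
  shows "integrable lborel (\<lambda>x. f0 x *\<^sub>R h (\<Theta> t (fst x) (snd x)))"
proof (rule Bochner_Integration.integrable_bound[OF f0_int])
  show "(\<lambda>x. f0 x *\<^sub>R h (\<Theta> t (fst x) (snd x))) \<in> borel_measurable lborel"
    unfolding measurable_lborel2 measurable_pair_borel_dom by measurable
  show "AE x in lborel. norm (f0 x *\<^sub>R h (\<Theta> t (fst x) (snd x))) \<le> norm (f0 x)"
    using bound f0_nonneg by (auto intro!: mult_left_le)
qed

lemma integrable_f0_cos: "integrable lborel (\<lambda>x. f0 x * cos (\<Theta> t (fst x) (snd x)))"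
  using integrable_f0_bounded[of cos] by simp

lemma integrable_f0_sin: "integrable lborel (\<lambda>x. f0 x * sin (\<Theta> t (fst x) (snd x)))"
  using integrable_f0_bounded[of sin] by simp

lemma integral_f0_bounded_le:
  assumes "h \<in> borel_measurable borel" and bound: "\<And>z. \<bar>h z\<bar> \<le> 1"
  shows "\<bar>\<integral>x. f0 x * h (\<Theta> t (fst x) (snd x)) \<partial>lborel\<bar> \<le> 1"
proof -
  have "\<bar>\<integral>x. f0 x * h (\<Theta> t (fst x) (snd x)) \<partial>lborel\<bar> \<le> (\<integral>x. f0 x \<partial>lborel)"
    using integrable_f0_bounded[of h t] assms f0_int f0_nonneg
    by (intro integral_abs_bound_integral) (auto simp: abs_mult intro!: mult_left_le)
  then show ?thesis using f0_prob by simp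
qed

definition Rcos :: "real \<Rightarrow> real" where
  "Rcos t = (\<integral>x. f0 x * cos (\<Theta> t (fst x) (snd x)) \<partial>lborel)"

definition Rsin :: "real \<Rightarrow> real" where
  "Rsin t = (\<integral>x. f0 x * sin (\<Theta> t (fst x) (snd x)) \<partial>lborel)"

lemma Rcos_bound: "\<bar>Rcos t\<bar> \<le> 1"
  unfolding Rcos_def by (rule integral_f0_bounded_le) auto

lemma Rsin_bound: "\<bar>Rsin t\<bar> \<le> 1"
  unfolding Rsin_def by (rule integral_f0_bounded_le) auto

lemma order_combination_bound:
  assumes "\<bar>a\<bar> \<le> 1" "\<bar>b\<bar> \<le> 1"
  shows "\<bar>Rcos t * a + Rsin t * b\<bar> \<le> 2"
proof -
  have "\<bar>Rcos t * a\<bar> \<le> 1" "\<bar>Rsin t * b\<bar> \<le> 1"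
    unfolding abs_mult using Rcos_bound[of t] Rsin_bound[of t] assms by (auto intro: mult_le_one)
  then show ?thesis by linarith
qed

lemma order_param_sq: "(order_param (\<mu> t))\<^sup>2 = (Rcos t)\<^sup>2 + (Rsin t)\<^sup>2"
proof -
  have cis_meas: "cis \<in> borel_measurable borel"
    by (rule borel_measurable_continuous_onI) (auto intro: continuous_intros)
  have cis_fst_meas: "(\<lambda>y::real \<times> real. cis (fst y)) \<in> borel_measurable lborel"
    unfolding measurable_lborel2 measurable_pair_borel_dom by (rule measurable_compose[OF measurable_fst cis_meas])
  have I: "(\<integral> y. cis (fst y) \<partial>\<mu> t) = (\<integral>x. f0 x *\<^sub>R cis (\<Theta> t (fst x) (snd x)) \<partial>lborel)"
    by (subst integral_mu[OF cis_fst_meas]) (simp add: flow_map_def cis.ctr)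
  have int: "integrable lborel (\<lambda>x. f0 x *\<^sub>R cis (\<Theta> t (fst x) (snd x)))"
    by (rule integrable_f0_bounded[OF cis_meas]) simp
  have "Re (\<integral> y. cis (fst y) \<partial>\<mu> t) = Rcos t" "Im (\<integral> y. cis (fst y) \<partial>\<mu> t) = Rsin t"
    unfolding I Rcos_def Rsin_def using integral_Re[OF int] integral_Im[OF int] by simp_all
  then show ?thesis unfolding order_param_def cmod_power2 by simp
qed

lemma interaction_term: "(\<integral> y. sin (z - fst y) \<partial>\<mu> t) = sin z * Rcos t - cos z * Rsin t"
proof -
  have "(\<integral> y. sin (z - fst y) \<partial>\<mu> t) = (\<integral>x. f0 x * sin (z - fst (flow_map t x)) \<partial>lborel)"
    by (rule integral_mu[where 'b=real, simplified]) (simp add: measurable_pair_borel_dom)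
  also have "\<dots> = (\<integral>x. sin z * (f0 x * cos (\<Theta> t (fst x) (snd x)))
                      - cos z * (f0 x * sin (\<Theta> t (fst x) (snd x))) \<partial>lborel)"
    by (intro Bochner_Integration.integral_cong refl) (simp add: flow_map_def sin_diff algebra_simps)
  also have "\<dots> = sin z * Rcos t - cos z * Rsin t"
    using integrable_f0_cos integrable_f0_sin by (simp add: Rcos_def Rsin_def)
  finally show ?thesis .
qed

definition vel :: "real \<Rightarrow> real \<Rightarrow> real \<Rightarrow> real" where
  "vel t z \<omega> = \<omega> - K * (sin z * Rcos t - cos z * Rsin t)"

definition vel_dz :: "real \<Rightarrow> real \<Rightarrow> real" where
  "vel_dz t z = - K * (Rcos t * cos z + Rsin t * sin z)"

lemma vel_deriv_z: "((\<lambda>z. vel t z \<omega>) has_real_derivative vel_dz t z) (at z)"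
  unfolding vel_def vel_dz_def by (auto intro!: derivative_eq_intros simp: algebra_simps)

lemma vel_dz_bound: "\<bar>vel_dz t z\<bar> \<le> 2 * K"
  using order_combination_bound[of "cos z" "sin z" t] K_pos by (simp add: vel_dz_def abs_mult)

text \<open>The velocity is (2K)-Lipschitz in the angle, its z-derivative as well, so the
  first-order Taylor remainder of the velocity is quadratic.\<close>
lemma vel_lipschitz: "\<bar>vel t x \<omega> - vel t y \<omega>\<bar> \<le> 2 * K * \<bar>x - y\<bar>"
  using mean_value_bound[of "\<lambda>z. vel t z \<omega>" "vel_dz t" y x "2 * K"] vel_deriv_z vel_dz_bound by blast

lemma vel_dz_lipschitz: "\<bar>vel_dz t x - vel_dz t y\<bar> \<le> 2 * K * \<bar>x - y\<bar>"
proof (rule mean_value_bound[where f' = "\<lambda>z. - K * (Rcos t * - sin z + Rsin t * cos z)"])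
  show "(vel_dz t has_real_derivative - K * (Rcos t * - sin z + Rsin t * cos z)) (at z)" for z
    unfolding vel_dz_def by (auto intro!: derivative_eq_intros)
  show "\<bar>- K * (Rcos t * - sin z + Rsin t * cos z)\<bar> \<le> 2 * K" for z
    using order_combination_bound[of "- sin z" "cos z" t] K_pos by (simp add: abs_mult)
qed

lemma vel_taylor: "\<bar>vel t y \<omega> - vel t x \<omega> - vel_dz t x * (y - x)\<bar> \<le> 2 * K * (y - x)\<^sup>2"
proof -
  have "\<bar>(vel t y \<omega> - vel_dz t x * y) - (vel t x \<omega> - vel_dz t x * x)\<bar> \<le> (2 * K * \<bar>y - x\<bar>) * \<bar>y - x\<bar>"
  proof (rule mean_value_bound[where f' = "\<lambda>z. vel_dz t z - vel_dz t x"])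
    show "((\<lambda>z. vel t z \<omega> - vel_dz t x * z) has_real_derivative vel_dz t z - vel_dz t x) (at z)" for z
      by (auto intro!: derivative_eq_intros vel_deriv_z)
    show "\<bar>vel_dz t z - vel_dz t x\<bar> \<le> 2 * K * \<bar>y - x\<bar>" if "min x y \<le> z" "z \<le> max x y" for z
    proof -
      have "\<bar>z - x\<bar> \<le> \<bar>y - x\<bar>" using that by (auto simp: min_def max_def split: if_splits)
      then show ?thesis using vel_dz_lipschitz[of t z x] K_pos by (smt (verit) mult_left_mono)
    qed
  qed
  then show ?thesis by (simp add: power2_eq_square algebra_simps abs_mult)
qed

lemma \<Theta>_deriv: "((\<lambda>s. \<Theta> s \<theta> \<omega>) has_real_derivative vel t (\<Theta> t \<theta> \<omega>) \<omega>) (at t)"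
  using \<Theta>_ode[of \<theta> \<omega> t] by (simp add: interaction_term vel_def)

lemma \<Theta>_cont: "isCont (\<lambda>s. \<Theta> s \<theta> \<omega>) t"
  using \<Theta>_deriv by (rule DERIV_isCont)

lemma isCont_integral_along_flow:
  assumes hc: "continuous_on UNIV h" and b: "\<And>z. \<bar>h z\<bar> \<le> 1"
  shows "isCont (\<lambda>t. \<integral>x. f0 x * h (\<Theta> t (fst x) (snd x)) \<partial>lborel) t"
proof -
  have [measurable]: "h \<in> borel_measurable borel" using hc by (rule borel_measurable_continuous_onI)
  show ?thesis unfolding continuous_at_sequentially comp_def
  proof (intro allI impI)
    fix X assume X: "X \<longlonglongrightarrow> t"
    show "(\<lambda>n. \<integral>x. f0 x * h (\<Theta> (X n) (fst x) (snd x)) \<partial>lborel)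
            \<longlonglongrightarrow> (\<integral>x. f0 x * h (\<Theta> t (fst x) (snd x)) \<partial>lborel)"
    proof (rule integral_dominated_convergence[where w=f0])
      have meas: "(\<lambda>x. f0 x * h (\<Theta> s (fst x) (snd x))) \<in> borel_measurable lborel" for s
        unfolding measurable_lborel2 measurable_pair_borel_dom by measurable
      show "(\<lambda>x. f0 x * h (\<Theta> t (fst x) (snd x))) \<in> borel_measurable lborel"
        "(\<lambda>x. f0 x * h (\<Theta> (X n) (fst x) (snd x))) \<in> borel_measurable lborel" for n
        by (rule meas)+
      show "integrable lborel f0" by (rule f0_int)
      show "AE x in lborel. (\<lambda>n. f0 x * h (\<Theta> (X n) (fst x) (snd x)))
                             \<longlonglongrightarrow> f0 x * h (\<Theta> t (fst x) (snd x))"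
      proof (intro AE_I2 tendsto_mult tendsto_const)
        fix x :: "real \<times> real"
        have "(\<lambda>n. \<Theta> (X n) (fst x) (snd x)) \<longlonglongrightarrow> \<Theta> t (fst x) (snd x)"
          using isCont_tendsto_compose[OF \<Theta>_cont X] .
        then show "(\<lambda>n. h (\<Theta> (X n) (fst x) (snd x))) \<longlonglongrightarrow> h (\<Theta> t (fst x) (snd x))"
          using hc by (intro isCont_tendsto_compose[where g=h]) (auto simp: continuous_on_eq_continuous_at)
      qed
      show "AE x in lborel. norm (f0 x * h (\<Theta> (X n) (fst x) (snd x))) \<le> f0 x" for n
        using b f0_nonneg by (auto simp: abs_mult intro!: mult_left_le)
    qed
  qed
qed

lemma Rcos_cont: "isCont Rcos t"
  unfolding Rcos_def[abs_def] by (rule isCont_integral_along_flow) (auto intro: continuous_intros)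

lemma Rsin_cont: "isCont Rsin t"
  unfolding Rsin_def[abs_def] by (rule isCont_integral_along_flow) (auto intro: continuous_intros)

text \<open>All properties follow from uniqueness for the Lipschitz ODE with velocity vel.\<close>
lemma \<Theta>_inj: "\<Theta> t \<theta>1 \<omega> = \<Theta> t \<theta>2 \<omega> \<Longrightarrow> \<theta>1 = \<theta>2"
  using ode_unique[of "\<lambda>s. \<Theta> s \<theta>1 \<omega>" "\<lambda>s z. vel s z \<omega>" "\<lambda>s. \<Theta> s \<theta>2 \<omega>" "2 * K" t 0]
    \<Theta>_deriv vel_lipschitz by (simp add: \<Theta>_init)

lemma \<Theta>_period: "\<Theta> t (\<theta> + 2 * pi * of_int k) \<omega> = \<Theta> t \<theta> \<omega> + 2 * pi * of_int k"
proof (rule ode_unique[of _ "\<lambda>s z. vel s z \<omega>" "\<lambda>s. \<Theta> s \<theta> \<omega> + 2 * pi * of_int k" "2 * K" 0])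
  have "vel s (z + 2 * pi * of_int k) \<omega> = vel s z \<omega>" for s z
    by (simp add: vel_def sin_shift_2pi_int cos_shift_2pi_int)
  then show "((\<lambda>s. \<Theta> s \<theta> \<omega> + 2 * pi * of_int k) has_real_derivative
               vel s (\<Theta> s \<theta> \<omega> + 2 * pi * of_int k) \<omega>) (at s)" for s
    by (auto intro!: derivative_eq_intros \<Theta>_deriv)
qed (auto intro: \<Theta>_deriv vel_lipschitz simp: \<Theta>_init)

text \<open>Two characteristics cannot cross: their distance is continuous in time and never vanishes.\<close>
lemma \<Theta>_mono: assumes "\<theta>1 < \<theta>2" shows "\<Theta> t \<theta>1 \<omega> < \<Theta> t \<theta>2 \<omega>"
proof (rule ccontr)
  assume "\<not> ?thesis"
  then have le: "\<Theta> t \<theta>2 \<omega> - \<Theta> t \<theta>1 \<omega> \<le> 0" by simp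
  define d where "d s = \<Theta> s \<theta>2 \<omega> - \<Theta> s \<theta>1 \<omega>" for s
  have d0: "d 0 > 0" using assms by (simp add: d_def \<Theta>_init)
  have dc: "continuous_on A d" for A
    unfolding d_def by (intro continuous_at_imp_continuous_on ballI continuous_intros \<Theta>_cont)
  have "\<exists>s. d s = 0"
  proof (cases "0 \<le> t")
    case True
    then show ?thesis using IVT2'[of d t 0 0, OF _ _ True dc] le d0 by (auto simp: d_def)
  next
    case False
    then show ?thesis using IVT'[of d t 0 0, OF _ _ _ dc] le d0 by (auto simp: d_def)
  qed
  then obtain s where "d s = 0" by blast
  then have "\<theta>2 = \<theta>1" using \<Theta>_inj[of s \<theta>2 \<omega> \<theta>1] by (simp add: d_def)
  then show False using assms by simp
qed

subsection \<open>The Jacobian of the flow\<close>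

text \<open>Liouville's formula: the angular Jacobian of the flow is the exponential of the time
  integral of vel_dz along the characteristic. The rate is continuous in time, so it has a
  primitive; log_jac is the primitive vanishing at time 0.\<close>
definition stretch_rate :: "real \<Rightarrow> real \<Rightarrow> real \<Rightarrow> real" where
  "stretch_rate s \<theta> \<omega> = vel_dz s (\<Theta> s \<theta> \<omega>)"

lemma stretch_rate_cont: "isCont (\<lambda>s. stretch_rate s \<theta> \<omega>) t"
  unfolding stretch_rate_def vel_dz_def by (intro continuous_intros Rcos_cont Rsin_cont \<Theta>_cont)

definition stretch_prim :: "real \<Rightarrow> real \<Rightarrow> real \<Rightarrow> real" where
  "stretch_prim \<theta> \<omega> = (SOME F. \<forall>s. (F has_real_derivative stretch_rate s \<theta> \<omega>) (at s))"

definition log_jac :: "real \<Rightarrow> real \<Rightarrow> real \<Rightarrow> real" where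
  "log_jac t \<theta> \<omega> = stretch_prim \<theta> \<omega> t - stretch_prim \<theta> \<omega> 0"

definition jac :: "real \<Rightarrow> real \<Rightarrow> real \<Rightarrow> real" where
  "jac t \<theta> \<omega> = exp (log_jac t \<theta> \<omega>)"

lemma stretch_prim_deriv: "(stretch_prim \<theta> \<omega> has_real_derivative stretch_rate s \<theta> \<omega>) (at s)"
proof -
  have "\<exists>F. \<forall>x::real. -\<infinity> < ereal x \<longrightarrow> ereal x < \<infinity> \<longrightarrow>
          (F has_vector_derivative stretch_rate x \<theta> \<omega>) (at x)"
    by (rule einterval_antiderivative) (auto intro: stretch_rate_cont)
  then have "\<exists>F. \<forall>s. (F has_real_derivative stretch_rate s \<theta> \<omega>) (at s)"
    by (auto simp: has_real_derivative_iff_has_vector_derivative)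
  then show ?thesis
    unfolding stretch_prim_def by (rule someI2_ex) blast
qed

lemma log_jac_deriv: "((\<lambda>s. log_jac s \<theta> \<omega>) has_real_derivative stretch_rate t \<theta> \<omega>) (at t)"
  unfolding log_jac_def by (auto intro!: derivative_eq_intros stretch_prim_deriv)

lemma log_jac_0[simp]: "log_jac 0 \<theta> \<omega> = 0"
  by (simp add: log_jac_def)

lemma log_jac_bound: "\<bar>log_jac t \<theta> \<omega>\<bar> \<le> 2 * K * \<bar>t\<bar>"
  using mean_value_bound[of "\<lambda>s. log_jac s \<theta> \<omega>" "\<lambda>s. stretch_rate s \<theta> \<omega>" 0 t "2 * K"]
    log_jac_deriv vel_dz_bound by (simp add: stretch_rate_def)

lemma jac_pos: "jac t \<theta> \<omega> > 0"
  by (simp add: jac_def)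

lemma jac_le: "jac s \<theta> \<omega> \<le> exp (2 * K * \<bar>s\<bar>)"
  unfolding jac_def using log_jac_bound[of s \<theta> \<omega>] by simp

text \<open>To identify jac with the angular derivative of the flow we follow the difference
  quotient of two characteristics in time: its logarithm grows at the rate of a secant
  slope of the velocity, which differs from stretch_rate by O(h).\<close>
definition diff_quot :: "real \<Rightarrow> real \<Rightarrow> real \<Rightarrow> real \<Rightarrow> real" where
  "diff_quot h s \<theta> \<omega> = (\<Theta> s (\<theta> + h) \<omega> - \<Theta> s \<theta> \<omega>) / h"

definition vel_secant :: "real \<Rightarrow> real \<Rightarrow> real \<Rightarrow> real \<Rightarrow> real" where
  "vel_secant s x y \<omega> = (vel s y \<omega> - vel s x \<omega>) / (y - x)"

lemma vel_secant_bound: "\<bar>vel_secant s x y \<omega>\<bar> \<le> 2 * K"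
proof (cases "x = y")
  case False
  then show ?thesis
    using vel_lipschitz[of s y \<omega> x] by (simp add: vel_secant_def abs_divide pos_divide_le_eq)
qed (use K_pos in \<open>simp add: vel_secant_def\<close>)

lemma vel_secant_approx:
  assumes "x \<noteq> y"
  shows "\<bar>vel_secant s x y \<omega> - vel_dz s x\<bar> \<le> 2 * K * \<bar>y - x\<bar>"
proof -
  have "vel_secant s x y \<omega> - vel_dz s x = (vel s y \<omega> - vel s x \<omega> - vel_dz s x * (y - x)) / (y - x)"
    using assms by (simp add: vel_secant_def field_simps)
  moreover have "\<bar>vel s y \<omega> - vel s x \<omega> - vel_dz s x * (y - x)\<bar> \<le> (2 * K * \<bar>y - x\<bar>) * \<bar>y - x\<bar>"
    using vel_taylor[of s y \<omega> x] by (simp add: power2_eq_square abs_mult_self_eq)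
  ultimately show ?thesis
    using assms by (simp add: abs_divide pos_divide_le_eq)
qed

lemma diff_quot_pos:
  assumes "h \<noteq> 0"
  shows "diff_quot h s \<theta> \<omega> > 0"
proof (cases "h > 0")
  case True
  then show ?thesis using \<Theta>_mono[of \<theta> "\<theta> + h" s \<omega>] by (simp add: diff_quot_def)
next
  case False
  then have "h < 0" using assms by simp
  then show ?thesis
    using \<Theta>_mono[of "\<theta> + h" \<theta> s \<omega>] by (simp add: diff_quot_def divide_neg_neg)
qed

lemma ln_diff_quot_deriv:
  assumes "h \<noteq> 0"
  shows "((\<lambda>s. ln (diff_quot h s \<theta> \<omega>)) has_real_derivative
           vel_secant s (\<Theta> s \<theta> \<omega>) (\<Theta> s (\<theta> + h) \<omega>) \<omega>) (at s)"
proof -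
  have sep: "\<Theta> s (\<theta> + h) \<omega> - \<Theta> s \<theta> \<omega> \<noteq> 0"
    using diff_quot_pos[OF assms, of s \<theta> \<omega>] by (auto simp: diff_quot_def)
  have "((\<lambda>s. diff_quot h s \<theta> \<omega>) has_real_derivative
          (vel s (\<Theta> s (\<theta> + h) \<omega>) \<omega> - vel s (\<Theta> s \<theta> \<omega>) \<omega>) / h) (at s)"
    unfolding diff_quot_def using assms by (auto intro!: derivative_eq_intros \<Theta>_deriv)
  from DERIV_chain2[OF DERIV_ln_divide[OF diff_quot_pos[OF assms]] this]
  moreover have "1 / diff_quot h s \<theta> \<omega> * ((vel s (\<Theta> s (\<theta> + h) \<omega>) \<omega> - vel s (\<Theta> s \<theta> \<omega>) \<omega>) / h)
      = vel_secant s (\<Theta> s \<theta> \<omega>) (\<Theta> s (\<theta> + h) \<omega>) \<omega>"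
    using assms sep by (simp add: diff_quot_def vel_secant_def)
  ultimately show ?thesis by simp
qed

lemma ln_diff_quot_bound:
  assumes "h \<noteq> 0"
  shows "\<bar>ln (diff_quot h s \<theta> \<omega>)\<bar> \<le> 2 * K * \<bar>s\<bar>"
  using mean_value_bound[OF ln_diff_quot_deriv[OF assms], where a = 0 and b = s and B = "2 * K"]
    vel_secant_bound assms
  by (simp add: diff_quot_def \<Theta>_init)

lemma ln_diff_quot_approx:
  assumes h: "h \<noteq> 0"
  shows "\<bar>ln (diff_quot h t \<theta> \<omega>) - log_jac t \<theta> \<omega>\<bar> \<le> 2 * K * exp (2 * K * \<bar>t\<bar>) * \<bar>t\<bar> * \<bar>h\<bar>"
proof -
  define X where "X s = \<Theta> s \<theta> \<omega>" for s
  define Y where "Y s = \<Theta> s (\<theta> + h) \<omega>" for s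
  have "\<bar>(ln (diff_quot h t \<theta> \<omega>) - log_jac t \<theta> \<omega>) - (ln (diff_quot h 0 \<theta> \<omega>) - log_jac 0 \<theta> \<omega>)\<bar>
      \<le> (2 * K * exp (2 * K * \<bar>t\<bar>) * \<bar>h\<bar>) * \<bar>t - 0\<bar>"
  proof (rule mean_value_bound[where f' = "\<lambda>s. vel_secant s (X s) (Y s) \<omega> - stretch_rate s \<theta> \<omega>"])
    show "((\<lambda>s. ln (diff_quot h s \<theta> \<omega>) - log_jac s \<theta> \<omega>) has_real_derivative
            vel_secant s (X s) (Y s) \<omega> - stretch_rate s \<theta> \<omega>) (at s)" for s
      unfolding X_def Y_def by (intro derivative_intros ln_diff_quot_deriv log_jac_deriv h)
    fix s assume s: "min 0 t \<le> s" "s \<le> max 0 t"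
    have "Y s - X s = h * diff_quot h s \<theta> \<omega>"
      using h by (simp add: X_def Y_def diff_quot_def)
    then have dist: "\<bar>Y s - X s\<bar> = \<bar>h\<bar> * diff_quot h s \<theta> \<omega>"
      using diff_quot_pos[OF h, of s \<theta> \<omega>] by (simp add: abs_mult)
    have "diff_quot h s \<theta> \<omega> \<le> exp (2 * K * \<bar>t\<bar>)"
    proof -
      have "ln (diff_quot h s \<theta> \<omega>) \<le> 2 * K * \<bar>t\<bar>"
        using ln_diff_quot_bound[OF h, of s \<theta> \<omega>] s K_pos
        by (smt (verit, best) mult_left_mono)
      then show ?thesis using diff_quot_pos[OF h, of s \<theta> \<omega>] by (metis exp_le_cancel_iff exp_ln)
    qed
    then have "2 * K * \<bar>Y s - X s\<bar> \<le> 2 * K * exp (2 * K * \<bar>t\<bar>) * \<bar>h\<bar>"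
      unfolding dist using K_pos by (simp add: mult_left_mono mult.commute mult.left_commute)
    moreover have "X s \<noteq> Y s"
      using diff_quot_pos[OF h, of s \<theta> \<omega>] by (auto simp: X_def Y_def diff_quot_def)
    ultimately show "\<bar>vel_secant s (X s) (Y s) \<omega> - stretch_rate s \<theta> \<omega>\<bar>
        \<le> 2 * K * exp (2 * K * \<bar>t\<bar>) * \<bar>h\<bar>"
      using vel_secant_approx[of "X s" "Y s" s \<omega>] by (simp add: stretch_rate_def X_def)
  qed
  then show ?thesis
    using h by (simp add: diff_quot_def \<Theta>_init ac_simps)
qed

lemma \<Theta>_dtheta: "((\<lambda>\<theta>'. \<Theta> t \<theta>' \<omega>) has_real_derivative jac t \<theta> \<omega>) (at \<theta>)"
proof -
  define C where "C = 2 * K * exp (2 * K * \<bar>t\<bar>) * \<bar>t\<bar>"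
  have nz: "\<forall>\<^sub>F h in at 0. h \<noteq> (0::real)" by (simp add: eventually_at_filter)
  have "((\<lambda>h. ln (diff_quot h t \<theta> \<omega>) - log_jac t \<theta> \<omega>) \<longlongrightarrow> 0) (at 0)"
  proof (rule Lim_null_comparison)
    show "\<forall>\<^sub>F h in at 0. norm (ln (diff_quot h t \<theta> \<omega>) - log_jac t \<theta> \<omega>) \<le> C * \<bar>h\<bar>"
      using nz by eventually_elim (use ln_diff_quot_approx in \<open>simp add: C_def\<close>)
    have "((\<lambda>h. C * \<bar>h\<bar>) \<longlongrightarrow> C * \<bar>0\<bar>) (at (0::real))"
      by (intro tendsto_intros)
    then show "((\<lambda>h. C * \<bar>h\<bar>) \<longlongrightarrow> 0) (at 0)" by simp
  qed
  then have "((\<lambda>h. exp (ln (diff_quot h t \<theta> \<omega>))) \<longlongrightarrow> jac t \<theta> \<omega>) (at 0)"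
    unfolding jac_def by (intro tendsto_exp) (simp add: LIM_zero_iff)
  moreover have "\<forall>\<^sub>F h in at 0. exp (ln (diff_quot h t \<theta> \<omega>)) = diff_quot h t \<theta> \<omega>"
    using nz by eventually_elim (simp add: diff_quot_pos)
  ultimately have "((\<lambda>h. diff_quot h t \<theta> \<omega>) \<longlongrightarrow> jac t \<theta> \<omega>) (at 0)"
    by (rule Lim_transform_eventually)
  then show ?thesis unfolding DERIV_def diff_quot_def .
qed

text \<open>Regularity in the angle: the flow and log_jac are Lipschitz, so jac is continuous;
  jac is 2pi-periodic and measurable.\<close>
lemma \<Theta>_lip: "\<bar>\<Theta> s \<theta>2 \<omega> - \<Theta> s \<theta>1 \<omega>\<bar> \<le> exp (2 * K * \<bar>s\<bar>) * \<bar>\<theta>2 - \<theta>1\<bar>"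
  by (rule mean_value_bound[of "\<lambda>\<theta>'. \<Theta> s \<theta>' \<omega>" "\<lambda>\<theta>'. jac s \<theta>' \<omega>"])
     (use \<Theta>_dtheta jac_le jac_pos in \<open>auto simp: abs_of_pos\<close>)

lemma log_jac_lip:
  "\<bar>log_jac t \<theta>1 \<omega> - log_jac t \<theta>2 \<omega>\<bar> \<le> (2 * K * exp (2 * K * \<bar>t\<bar>) * \<bar>t\<bar>) * \<bar>\<theta>1 - \<theta>2\<bar>"
proof -
  have "\<bar>(log_jac t \<theta>1 \<omega> - log_jac t \<theta>2 \<omega>) - (log_jac 0 \<theta>1 \<omega> - log_jac 0 \<theta>2 \<omega>)\<bar>
      \<le> (2 * K * exp (2 * K * \<bar>t\<bar>) * \<bar>\<theta>1 - \<theta>2\<bar>) * \<bar>t - 0\<bar>"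
  proof (rule mean_value_bound[where f' = "\<lambda>s. stretch_rate s \<theta>1 \<omega> - stretch_rate s \<theta>2 \<omega>"])
    show "((\<lambda>s. log_jac s \<theta>1 \<omega> - log_jac s \<theta>2 \<omega>) has_real_derivative
            stretch_rate s \<theta>1 \<omega> - stretch_rate s \<theta>2 \<omega>) (at s)" for s
      by (intro derivative_intros log_jac_deriv)
    fix s assume s: "min 0 t \<le> s" "s \<le> max 0 t"
    have st: "\<bar>s\<bar> \<le> \<bar>t\<bar>" using s by (simp add: min_def max_def split: if_splits)
    have "exp (2 * K * \<bar>s\<bar>) \<le> exp (2 * K * \<bar>t\<bar>)" using st K_pos by (simp add: mult_left_mono)
    then have "\<bar>\<Theta> s \<theta>1 \<omega> - \<Theta> s \<theta>2 \<omega>\<bar> \<le> exp (2 * K * \<bar>t\<bar>) * \<bar>\<theta>1 - \<theta>2\<bar>"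
      using \<Theta>_lip[of s \<theta>1 \<omega> \<theta>2] by (meson abs_ge_zero mult_right_mono order_trans)
    then have "2 * K * \<bar>\<Theta> s \<theta>1 \<omega> - \<Theta> s \<theta>2 \<omega>\<bar> \<le> 2 * K * (exp (2 * K * \<bar>t\<bar>) * \<bar>\<theta>1 - \<theta>2\<bar>)"
      using K_pos by (simp add: mult_left_mono)
    then show "\<bar>stretch_rate s \<theta>1 \<omega> - stretch_rate s \<theta>2 \<omega>\<bar> \<le> 2 * K * exp (2 * K * \<bar>t\<bar>) * \<bar>\<theta>1 - \<theta>2\<bar>"
      using vel_dz_lipschitz[of s "\<Theta> s \<theta>1 \<omega>" "\<Theta> s \<theta>2 \<omega>"]
      by (simp add: stretch_rate_def ac_simps)
  qed
  then show ?thesis by (simp add: ac_simps)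
qed

lemma log_jac_cont: "continuous_on UNIV (\<lambda>\<theta>. log_jac t \<theta> \<omega>)"
proof (rule lipschitz_on_continuous_on)
  show "(2 * K * exp (2 * K * \<bar>t\<bar>) * \<bar>t\<bar>)-lipschitz_on UNIV (\<lambda>\<theta>. log_jac t \<theta> \<omega>)"
    unfolding lipschitz_on_def dist_real_def using K_pos log_jac_lip by auto
qed

lemma jac_cont: "continuous_on UNIV (\<lambda>\<theta>. jac t \<theta> \<omega>)"
  unfolding jac_def by (intro continuous_intros log_jac_cont)

lemma jac_period: "jac t (\<theta> + 2 * pi * of_int k) \<omega> = jac t \<theta> \<omega>"
proof -
  have "((\<lambda>\<theta>'. \<Theta> t (\<theta>' + 2 * pi * of_int k) \<omega>) has_real_derivative
          jac t (\<theta> + 2 * pi * of_int k) \<omega> * 1) (at \<theta>)"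
    by (rule DERIV_chain2[OF \<Theta>_dtheta]) (auto intro!: derivative_eq_intros)
  moreover have "((\<lambda>\<theta>'. \<Theta> t (\<theta>' + 2 * pi * of_int k) \<omega>) has_real_derivative jac t \<theta> \<omega>) (at \<theta>)"
    unfolding \<Theta>_period by (auto intro!: derivative_eq_intros \<Theta>_dtheta)
  ultimately show ?thesis using DERIV_unique by fastforce
qed

text \<open>jac is a pointwise limit of measurable difference quotients.\<close>
lemma jac_meas[measurable]: "(\<lambda>x. jac t (fst x) (snd x)) \<in> borel_measurable (borel \<Otimes>\<^sub>M borel)"
proof (rule borel_measurable_LIMSEQ_real)
  fix x :: "real \<times> real"
  define q where "q h = (\<Theta> t (fst x + h) (snd x) - \<Theta> t (fst x) (snd x)) / h" for h
  have "(q \<longlongrightarrow> jac t (fst x) (snd x)) (at 0)"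
    using \<Theta>_dtheta[of t "snd x" "fst x"] unfolding DERIV_def q_def .
  then have "(q \<circ> (\<lambda>n. inverse (real (Suc n)))) \<longlonglongrightarrow> jac t (fst x) (snd x)"
    using LIMSEQ_inverse_real_of_nat unfolding tendsto_at_iff_sequentially by auto
  then show "(\<lambda>n. (\<Theta> t (fst x + inverse (real (Suc n))) (snd x) - \<Theta> t (fst x) (snd x))
                  / inverse (real (Suc n))) \<longlonglongrightarrow> jac t (fst x) (snd x)"
    by (simp add: comp_def q_def)
qed measurable

lemma log_jac_meas[measurable]:
  "(\<lambda>x. log_jac t (fst x) (snd x)) \<in> borel_measurable (borel \<Otimes>\<^sub>M borel)"
proof -
  have "(\<lambda>x. ln (jac t (fst x) (snd x))) \<in> borel_measurable (borel \<Otimes>\<^sub>M borel)" by measurable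
  then show ?thesis by (simp add: jac_def)
qed

lemma jac_meas_comp[measurable]:
  "g1 \<in> borel_measurable N \<Longrightarrow> g2 \<in> borel_measurable N \<Longrightarrow> (\<lambda>x. jac t (g1 x) (g2 x)) \<in> borel_measurable N"
  by (rule measurable_uncurry_compose[OF jac_meas])

lemma \<Theta>_mono_iff: "\<Theta> t a \<omega> \<le> \<Theta> t b \<omega> \<longleftrightarrow> a \<le> b"
  using \<Theta>_mono[of a b t \<omega>] \<Theta>_mono[of b a t \<omega>] by (cases a b rule: linorder_cases) auto

text \<open>Each Theta t _ omega is a continuous increasing bijection of the real line; it is onto by
  the intermediate value theorem between the images of consecutive multiples of 2pi.\<close>
lemma \<Theta>_cont_theta: "continuous_on A (\<lambda>\<theta>. \<Theta> t \<theta> \<omega>)"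
  by (intro continuous_at_imp_continuous_on ballI DERIV_isCont[OF \<Theta>_dtheta])

lemma \<Theta>_surj: "\<exists>\<theta>. \<Theta> t \<theta> \<omega> = y"
proof -
  define y0 where "y0 = \<Theta> t 0 \<omega>"
  define k where "k = \<lfloor>(y - y0) / (2 * pi)\<rfloor>"
  have p: "0 < 2 * pi" using pi_gt_zero by simp
  have a: "of_int k * (2 * pi) \<le> y - y0" "y - y0 < (of_int k + 1) * (2 * pi)"
    unfolding k_def by (rule floor_divide_lower[OF p], rule floor_divide_upper[OF p])
  have e1: "\<Theta> t (0 + 2 * pi * of_int k) \<omega> = y0 + 2 * pi * of_int k"
    unfolding y0_def by (rule \<Theta>_period)
  have e2: "\<Theta> t (0 + 2 * pi * of_int (k + 1)) \<omega> = y0 + 2 * pi * of_int (k + 1)"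
    unfolding y0_def by (rule \<Theta>_period)
  have "\<exists>x. 2 * pi * of_int k \<le> x \<and> x \<le> 2 * pi * of_int (k + 1) \<and> \<Theta> t x \<omega> = y"
    by (rule IVT'[OF _ _ _ \<Theta>_cont_theta]) (use e1 e2 a p in \<open>auto simp: algebra_simps\<close>)
  then show ?thesis by blast
qed

definition \<Psi> :: "real \<Rightarrow> real \<Rightarrow> real \<Rightarrow> real" where
  "\<Psi> t y \<omega> = (THE \<theta>. \<Theta> t \<theta> \<omega> = y)"

lemma \<Psi>_eq[simp]: "\<Theta> t (\<Psi> t y \<omega>) \<omega> = y"
  unfolding \<Psi>_def by (rule theI') (use \<Theta>_surj \<Theta>_inj in blast)

lemma \<Psi>_inv[simp]: "\<Psi> t (\<Theta> t \<theta> \<omega>) \<omega> = \<theta>"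
  unfolding \<Psi>_def by (rule the_equality) (auto dest: \<Theta>_inj)

lemma \<Psi>_shift: "\<Psi> t (y + 2 * pi * of_int k) \<omega> = \<Psi> t y \<omega> + 2 * pi * of_int k"
proof -
  have "y + 2 * pi * of_int k = \<Theta> t (\<Psi> t y \<omega> + 2 * pi * of_int k) \<omega>" by (simp add: \<Theta>_period)
  then show ?thesis by simp
qed

lemma \<Psi>_le_iff: "\<Psi> t y \<omega> \<le> c \<longleftrightarrow> y \<le> \<Theta> t c \<omega>"
  using \<Theta>_mono_iff[of t "\<Psi> t y \<omega>" \<omega> c] by simp

text \<open>The inverse flow is measurable, since its sublevel sets are given by the flow itself.\<close>
lemma \<Psi>_meas: "(\<lambda>x. \<Psi> t (fst x) (snd x)) \<in> borel_measurable (borel \<Otimes>\<^sub>M borel)"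
  unfolding borel_measurable_iff_le
proof
  fix c
  have "{w \<in> space (borel \<Otimes>\<^sub>M borel). \<Psi> t (fst w) (snd w) \<le> c}
      = {w \<in> space (borel \<Otimes>\<^sub>M borel). fst w \<le> \<Theta> t c (snd w)}"
    by (simp add: \<Psi>_le_iff)
  also have "\<dots> \<in> sets (borel \<Otimes>\<^sub>M borel)" by measurable
  finally show "{w \<in> space (borel \<Otimes>\<^sub>M borel). \<Psi> t (fst w) (snd w) \<le> c}
      \<in> sets (borel \<Otimes>\<^sub>M borel)" .
qed

lemma \<Psi>_meas_comp[measurable]:
  "g1 \<in> borel_measurable N \<Longrightarrow> g2 \<in> borel_measurable N \<Longrightarrow> (\<lambda>x. \<Psi> t (g1 x) (g2 x)) \<in> borel_measurable N"
  by (rule measurable_uncurry_compose[OF \<Psi>_meas])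

subsection \<open>The density of the push-forward measure\<close>

definition dens_per :: "real \<Rightarrow> real \<Rightarrow> real \<Rightarrow> real" where
  "dens_per t y \<omega> = f0 (wrap (\<Psi> t y \<omega>), \<omega>) / jac t (\<Psi> t y \<omega>) \<omega>"

definition dens :: "real \<Rightarrow> real \<times> real \<Rightarrow> real" where
  "dens t x = indicator Tstrip x * dens_per t (fst x) (snd x)"

lemma dens_per_shift: "dens_per t (y + 2 * pi * of_int k) \<omega> = dens_per t y \<omega>"
  by (simp add: dens_per_def \<Psi>_shift wrap_shift jac_period)

lemma dens_per_wrap: "dens_per t (wrap y) \<omega> = dens_per t y \<omega>"
  using wrap_eq[of y] dens_per_shift by metis

lemma dens_per_flow: "dens_per t (\<Theta> t \<theta> \<omega>) \<omega> = f0 (wrap \<theta>, \<omega>) / jac t \<theta> \<omega>"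
  by (simp add: dens_per_def)

lemma dens_per_meas_comp[measurable]:
  assumes [measurable]: "g1 \<in> borel_measurable N" "g2 \<in> borel_measurable N"
  shows "(\<lambda>x. dens_per t (g1 x) (g2 x)) \<in> borel_measurable N"
  unfolding dens_per_def by measurable

lemma dens_meas_pair[measurable]: "dens t \<in> borel_measurable (borel \<Otimes>\<^sub>M borel)"
  unfolding dens_def[abs_def] by measurable

lemma dens_meas[measurable]: "dens t \<in> borel_measurable borel"
  unfolding measurable_pair_borel_dom by (rule dens_meas_pair)

lemma dens_nonneg: "dens t y \<ge> 0"
  unfolding dens_def dens_per_def using f0_nonneg jac_pos by (auto intro!: divide_nonneg_pos)

lemma dens_supp: "y \<notin> Tstrip \<Longrightarrow> dens t y = 0"
  unfolding dens_def by simp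

text \<open>Change of variables on a single fibre {omega = const}: substitute y = Theta t theta omega
  over one period, then use periodicity to move the window [Theta t 0 omega, +2pi) back to [0,2pi).\<close>
lemma pushforward_fibre:
  assumes [measurable]: "g \<in> borel_measurable (borel \<Otimes>\<^sub>M borel)"
  shows "(\<integral>\<^sup>+\<theta>. ennreal (f0 (\<theta>, \<omega>)) * g (flow_map t (\<theta>, \<omega>)) \<partial>lborel)
       = (\<integral>\<^sup>+y. ennreal (dens t (y, \<omega>)) * g (y, \<omega>) \<partial>lborel)"
proof -
  define G where "G y = ennreal (dens_per t y \<omega>) * g (wrap y, \<omega>)" for y
  have [measurable]: "G \<in> borel_measurable borel" unfolding G_def[abs_def] by measurable
  have G_per: "G (y + 2 * pi) = G y" for y
    using dens_per_shift[of t y 1 \<omega>] wrap_shift[of y 1] by (simp add: G_def)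
  have "(\<integral>\<^sup>+\<theta>. ennreal (f0 (\<theta>, \<omega>)) * g (flow_map t (\<theta>, \<omega>)) \<partial>lborel)
      = (\<integral>\<^sup>+\<theta>. G (\<Theta> t \<theta> \<omega>) * ennreal (jac t \<theta> \<omega>) * indicator {0..2 * pi} \<theta> \<partial>lborel)"
  proof (rule nn_integral_cong_AE)
    show "AE \<theta> in lborel. ennreal (f0 (\<theta>, \<omega>)) * g (flow_map t (\<theta>, \<omega>))
        = G (\<Theta> t \<theta> \<omega>) * ennreal (jac t \<theta> \<omega>) * indicator {0..2 * pi} \<theta>"
      using AE_lborel_singleton[of "2 * pi"]
    proof eventually_elim
      case (elim \<theta>)
      show ?case
      proof (cases "0 \<le> \<theta> \<and> \<theta> < 2 * pi")
        case True
        then have "G (\<Theta> t \<theta> \<omega>) * ennreal (jac t \<theta> \<omega>)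
            = ennreal (f0 (\<theta>, \<omega>) / jac t \<theta> \<omega>) * ennreal (jac t \<theta> \<omega>) * g (flow_map t (\<theta>, \<omega>))"
          by (simp add: G_def dens_per_flow wrap_id flow_map_def ac_simps)
        also have "\<dots> = ennreal (f0 (\<theta>, \<omega>)) * g (flow_map t (\<theta>, \<omega>))"
          using jac_pos[of t \<theta> \<omega>] f0_nonneg by (simp add: ennreal_mult[symmetric])
        finally show ?thesis using True by simp
      next
        case False
        then have "f0 (\<theta>, \<omega>) = 0" by (intro f0_supp) (simp add: Tstrip_iff)
        moreover have "\<theta> \<notin> {0..2 * pi}" using False elim by auto
        ultimately show ?thesis by simp
      qed
    qed
  qed
  also have "\<dots> = (\<integral>\<^sup>+y. G y * indicator {\<Theta> t 0 \<omega>..\<Theta> t (2 * pi) \<omega>} y \<partial>lborel)"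
    by (rule nn_integral_substitution_interval[symmetric])
       (auto intro: \<Theta>_dtheta jac_cont less_imp_le[OF jac_pos])
  also have "\<dots> = (\<integral>\<^sup>+y. G y * indicator {\<Theta> t 0 \<omega>..<\<Theta> t 0 \<omega> + 2 * pi} y \<partial>lborel)"
  proof (rule nn_integral_cong_AE)
    have end_point: "\<Theta> t (2 * pi) \<omega> = \<Theta> t 0 \<omega> + 2 * pi" using \<Theta>_period[of t 0 1 \<omega>] by simp
    show "AE y in lborel. G y * indicator {\<Theta> t 0 \<omega>..\<Theta> t (2 * pi) \<omega>} y
        = G y * indicator {\<Theta> t 0 \<omega>..<\<Theta> t 0 \<omega> + 2 * pi} y"
      using AE_lborel_singleton[of "\<Theta> t 0 \<omega> + 2 * pi"] by eventually_elim (auto simp: end_point indicator_def)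
  qed
  also have "\<dots> = (\<integral>\<^sup>+y. G y * indicator {0..<2 * pi} y \<partial>lborel)"
    by (rule nn_integral_periodic_window) (use G_per pi_gt_zero in auto)
  also have "\<dots> = (\<integral>\<^sup>+y. ennreal (dens t (y, \<omega>)) * g (y, \<omega>) \<partial>lborel)"
    by (intro nn_integral_cong) (auto simp: G_def dens_def wrap_id Tstrip_iff indicator_def)
  finally show ?thesis .
qed

text \<open>Integrating the fibre identity over omega (Tonelli) gives the change of variables on the strip.\<close>
lemma pushforward_nn_integral:
  assumes [measurable]: "g \<in> borel_measurable (borel \<Otimes>\<^sub>M borel)"
  shows "(\<integral>\<^sup>+x. ennreal (f0 x) * g (flow_map t x) \<partial>lborel) = (\<integral>\<^sup>+y. ennreal (dens t y) * g y \<partial>lborel)"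
proof -
  have [measurable]: "flow_map t \<in> measurable (borel \<Otimes>\<^sub>M borel) (borel \<Otimes>\<^sub>M borel)"
    unfolding flow_map_def[abs_def] by measurable
  have "(\<integral>\<^sup>+x. ennreal (f0 x) * g (flow_map t x) \<partial>lborel) = (\<integral>\<^sup>+x. ennreal (f0 x) * g (flow_map t x) \<partial>(lborel \<Otimes>\<^sub>M lborel))"
    by (simp add: lborel_prod)
  also have "\<dots> = (\<integral>\<^sup>+\<omega>. (\<integral>\<^sup>+\<theta>. ennreal (f0 (\<theta>, \<omega>)) * g (flow_map t (\<theta>, \<omega>)) \<partial>lborel) \<partial>lborel)"
    by (rule lborel_pair.nn_integral_snd[symmetric]) measurable
  also have "\<dots> = (\<integral>\<^sup>+\<omega>. (\<integral>\<^sup>+y. ennreal (dens t (y, \<omega>)) * g (y, \<omega>) \<partial>lborel) \<partial>lborel)"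
    by (intro nn_integral_cong pushforward_fibre) measurable
  also have "\<dots> = (\<integral>\<^sup>+y. ennreal (dens t y) * g y \<partial>(lborel \<Otimes>\<^sub>M lborel))"
    by (rule lborel_pair.nn_integral_snd) measurable
  also have "\<dots> = (\<integral>\<^sup>+y. ennreal (dens t y) * g y \<partial>lborel)"
    by (simp add: lborel_prod)
  finally show ?thesis .
qed

lemma \<mu>_density: "\<mu> t = density lborel (\<lambda>x. ennreal (dens t x))"
proof (rule measure_eqI)
  show "sets (\<mu> t) = sets (density lborel (\<lambda>x. ennreal (dens t x)))" by (simp add: \<mu>_flow_map)
  fix A assume "A \<in> sets (\<mu> t)"
  then have Ab: "A \<in> sets borel" by (simp add: \<mu>_flow_map)
  then have [measurable]: "A \<in> sets (borel \<Otimes>\<^sub>M borel)" unfolding borel_prod .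
  have "emeasure (\<mu> t) A = emeasure (density lborel (\<lambda>x. ennreal (f0 x))) (flow_map t -` A \<inter> space lborel)"
    unfolding \<mu>_flow_map using flow_map_meas[of t] Ab by (subst emeasure_distr) auto
  also have "\<dots> = (\<integral>\<^sup>+x. ennreal (f0 x) * indicator (flow_map t -` A \<inter> space lborel) x \<partial>lborel)"
    by (rule emeasure_density) (use flow_map_meas[of t] Ab f0_meas measurable_sets[of "flow_map t" lborel lborel A] in auto)
  also have "\<dots> = (\<integral>\<^sup>+x. ennreal (f0 x) * indicator A (flow_map t x) \<partial>lborel)"
    by (intro nn_integral_cong) (simp add: indicator_def)
  also have "\<dots> = (\<integral>\<^sup>+y. ennreal (dens t y) * indicator A y \<partial>lborel)"
    by (rule pushforward_nn_integral) measurable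
  also have "\<dots> = emeasure (density lborel (\<lambda>x. ennreal (dens t x))) A"
    by (rule emeasure_density[symmetric]) (use Ab in auto)
  finally show "emeasure (\<mu> t) A = emeasure (density lborel (\<lambda>x. ennreal (dens t x))) A" .
qed

subsection \<open>Evolution of the entropy\<close>

lemma integrable_f0_ln_f0: "integrable lborel (\<lambda>x. f0 x * ln (f0 x))"
proof (rule Bochner_Integration.integrable_bound[OF f0_entropy])
  show "(\<lambda>x. f0 x * ln (f0 x)) \<in> borel_measurable lborel" using f0_meas by measurable
  show "AE x in lborel. norm (f0 x * ln (f0 x)) \<le> norm (f0 x * \<bar>ln (f0 x)\<bar>)"
    using f0_nonneg by (simp add: abs_mult)
qed

lemma log_jac_meas_lborel[measurable]: "(\<lambda>x. log_jac t (fst x) (snd x)) \<in> borel_measurable lborel"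
  unfolding measurable_lborel2 measurable_pair_borel_dom by (rule log_jac_meas)

lemma integrable_f0_log_jac: "integrable lborel (\<lambda>x. f0 x * log_jac t (fst x) (snd x))"
proof (rule Bochner_Integration.integrable_bound)
  show "integrable lborel (\<lambda>x. f0 x * (2 * K * \<bar>t\<bar>))" using f0_int by simp
  show "(\<lambda>x. f0 x * log_jac t (fst x) (snd x)) \<in> borel_measurable lborel" using f0_meas by measurable
  show "AE x in lborel. norm (f0 x * log_jac t (fst x) (snd x)) \<le> norm (f0 x * (2 * K * \<bar>t\<bar>))"
    using f0_nonneg log_jac_bound K_pos by (auto simp: abs_mult intro!: mult_left_mono)
qed

text \<open>Along a characteristic the density is divided by the Jacobian, so
  ln (dens t) = ln f0 - log_jac wherever f0 is positive.\<close>
lemma f0_ln_dens_flow: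
  "f0 x * ln (dens t (flow_map t x)) = f0 x * ln (f0 x) - f0 x * log_jac t (fst x) (snd x)"
proof (cases "f0 x = 0")
  case False
  obtain \<theta> \<omega> where x: "x = (\<theta>, \<omega>)" by (cases x)
  have "x \<in> Tstrip" using False f0_supp by blast
  then have "wrap \<theta> = \<theta>" by (auto simp: x Tstrip_iff wrap_id)
  then have "dens t (flow_map t x) = f0 x / jac t \<theta> \<omega>"
    using wrap_range[of "\<Theta> t \<theta> \<omega>"]
    by (simp add: dens_def flow_map_def x Tstrip_iff dens_per_wrap dens_per_flow)
  moreover have "f0 x > 0" using False f0_nonneg[of x] by simp
  ultimately have "ln (dens t (flow_map t x)) = ln (f0 x) - log_jac t \<theta> \<omega>"
    using jac_pos[of t \<theta> \<omega>] by (simp add: ln_div jac_def)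
  then show ?thesis by (simp add: x right_diff_distrib)
qed simp

lemma ln_dens_meas: "(\<lambda>y. ln (dens t y)) \<in> borel_measurable lborel"
  by measurable

text \<open>Transport the entropy integrand along the flow: integrating against the density
  dens t is integrating against mu t, i.e. against f0 after composing with flow_map t.\<close>
lemma density_dens_flow_map:
  "density lborel (\<lambda>x. ennreal (dens t x))
     = distr (density lborel (\<lambda>x. ennreal (f0 x))) lborel (flow_map t)"
  using \<mu>_density \<mu>_flow_map by simp

lemma integrable_dens_ln_dens: "integrable lborel (\<lambda>y. dens t y * ln (dens t y))"
proof -
  have "integrable lborel (\<lambda>x. f0 x *\<^sub>R ln (dens t (flow_map t x)))"
    using integrable_f0_ln_f0 integrable_f0_log_jac by (simp add: f0_ln_dens_flow)
  then have "integrable (density lborel (\<lambda>x. ennreal (f0 x))) (\<lambda>x. ln (dens t (flow_map t x)))"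
    using flow_map_meas[of t] ln_dens_meas f0_meas f0_nonneg
    by (subst integrable_density) (auto intro: measurable_compose)
  then have "integrable (density lborel (\<lambda>x. ennreal (dens t x))) (\<lambda>y. ln (dens t y))"
    unfolding density_dens_flow_map using flow_map_meas[of t] ln_dens_meas
    by (subst integrable_distr_eq) auto
  then show ?thesis
    using ln_dens_meas dens_nonneg by (subst (asm) integrable_density) auto
qed

definition mean_log_jac :: "real \<Rightarrow> real" where
  "mean_log_jac t = (\<integral>x. f0 x * log_jac t (fst x) (snd x) \<partial>lborel)"

lemma entropy_dens: "entropy (dens t) = (\<integral>x. f0 x * ln (f0 x) \<partial>lborel) - mean_log_jac t"
proof -
  have "entropy (dens t) = integral\<^sup>L (density lborel (\<lambda>x. ennreal (dens t x))) (\<lambda>y. ln (dens t y))"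
    unfolding entropy_def using ln_dens_meas dens_nonneg by (subst integral_density) auto
  also have "\<dots> = integral\<^sup>L (\<mu> t) (\<lambda>y. ln (dens t y))" by (simp add: \<mu>_density)
  also have "\<dots> = (\<integral>x. f0 x * ln (f0 x) - f0 x * log_jac t (fst x) (snd x) \<partial>lborel)"
    by (simp add: integral_mu[OF ln_dens_meas] f0_ln_dens_flow)
  also have "\<dots> = (\<integral>x. f0 x * ln (f0 x) \<partial>lborel) - mean_log_jac t"
    using integrable_f0_ln_f0 integrable_f0_log_jac by (simp add: mean_log_jac_def)
  finally show ?thesis .
qed

text \<open>The average stretching rate is -K R^2: this is where the order parameter appears.\<close>
lemma integral_f0_stretch_rate:
  "(\<integral>x. f0 x * stretch_rate t (fst x) (snd x) \<partial>lborel) = - K * ((Rcos t)\<^sup>2 + (Rsin t)\<^sup>2)"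
proof -
  have "(\<integral>x. f0 x * stretch_rate t (fst x) (snd x) \<partial>lborel) =
     (\<integral>x. (- K * Rcos t) * (f0 x * cos (\<Theta> t (fst x) (snd x)))
          + (- K * Rsin t) * (f0 x * sin (\<Theta> t (fst x) (snd x))) \<partial>lborel)"
    by (intro Bochner_Integration.integral_cong) (auto simp: stretch_rate_def vel_dz_def algebra_simps)
  also have "\<dots> = (- K * Rcos t) * Rcos t + (- K * Rsin t) * Rsin t"
    using integrable_f0_cos integrable_f0_sin by (simp add: Rcos_def Rsin_def)
  finally show ?thesis by (simp add: power2_eq_square algebra_simps)
qed

lemma mean_log_jac_deriv: "(mean_log_jac has_real_derivative - K * (order_param (\<mu> t))\<^sup>2) (at t)"
proof -
  have "((\<lambda>s. \<integral>x. f0 x * log_jac s (fst x) (snd x) \<partial>lborel) has_real_derivative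
          (\<integral>x. f0 x * stretch_rate t (fst x) (snd x) \<partial>lborel)) (at t)"
  proof (rule DERIV_integral_dominated[where w = "\<lambda>x. f0 x * (2 * K)"])
    show "(\<lambda>x. f0 x * stretch_rate t (fst x) (snd x)) \<in> borel_measurable lborel"
      unfolding stretch_rate_def vel_dz_def measurable_lborel2 measurable_pair_borel_dom by measurable
    show "\<bar>f0 x * stretch_rate s (fst x) (snd x)\<bar> \<le> f0 x * (2 * K)" for x s
      using f0_nonneg[of x] vel_dz_bound by (simp add: stretch_rate_def abs_mult mult_left_mono)
    show "((\<lambda>s. f0 x * log_jac s (fst x) (snd x)) has_real_derivative
            f0 x * stretch_rate s (fst x) (snd x)) (at s)" for x s
      by (intro DERIV_cmult log_jac_deriv)
  qed (use integrable_f0_log_jac f0_int in simp_all)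
  then show ?thesis
    by (simp add: mean_log_jac_def[abs_def] integral_f0_stretch_rate order_param_sq)
qed

lemma entropy_deriv: "((\<lambda>s. entropy (dens s)) has_real_derivative K * (order_param (\<mu> t))\<^sup>2) (at t)"
  unfolding entropy_dens using mean_log_jac_deriv[of t]
  by (auto intro!: derivative_eq_intros)

lemma entropy_mono: "mono (\<lambda>t. entropy (dens t))"
proof (rule monoI)
  fix a b :: real assume "a \<le> b"
  then show "entropy (dens a) \<le> entropy (dens b)"
  proof (rule DERIV_nonneg_imp_nondecreasing)
    show "\<exists>y. ((\<lambda>t. entropy (dens t)) has_real_derivative y) (at x) \<and> 0 \<le> y" for x
      using entropy_deriv[of x] K_pos by auto
  qed
qed

end

theorem mainTheorem10:
  fixes K :: real
    and f0 :: "real \<times> real \<Rightarrow> real"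
    and \<Theta> :: "real \<Rightarrow> real \<Rightarrow> real \<Rightarrow> real"
    and \<mu> :: "real \<Rightarrow> (real \<times> real) measure"
  assumes K_pos: "K > 0"
    and f0_meas: "f0 \<in> borel_measurable lborel"
    and f0_nonneg: "\<And>x. f0 x \<ge> 0"
    and f0_supp: "\<And>x. x \<notin> Tstrip \<Longrightarrow> f0 x = 0"
    and f0_int: "integrable lborel f0"
    and f0_prob: "(\<integral> x. f0 x \<partial>lborel) = 1"
    and f0_entropy: "integrable lborel (\<lambda>x. f0 x * \<bar>ln (f0 x)\<bar>)"
    and \<Theta>_meas: "\<And>t. (\<lambda>x. \<Theta> t (fst x) (snd x)) \<in> borel_measurable lborel"
    and \<mu>_def: "\<And>t. \<mu> t = distr (density lborel (\<lambda>x. ennreal (f0 x))) lborel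
                         (\<lambda>x. (wrap (\<Theta> t (fst x) (snd x)), snd x))"
    and \<Theta>_init: "\<And>\<theta> \<omega>. \<Theta> 0 \<theta> \<omega> = \<theta>"
    and \<Theta>_ode: "\<And>t \<theta> \<omega>. ((\<lambda>s. \<Theta> s \<theta> \<omega>) has_real_derivative
                   (\<omega> - K * (\<integral> y. sin (\<Theta> t \<theta> \<omega> - fst y) \<partial>\<mu> t))) (at t)"
  shows "\<exists>f :: real \<Rightarrow> real \<times> real \<Rightarrow> real.
           (\<forall>t. f t \<in> borel_measurable lborel \<and> (\<forall>x. f t x \<ge> 0) \<and>
                (\<forall>x. x \<notin> Tstrip \<longrightarrow> f t x = 0) \<and>
                \<mu> t = density lborel (\<lambda>x. ennreal (f t x)) \<and>
                integrable lborel (\<lambda>x. f t x * ln (f t x))) \<and>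
           (\<forall>t. ((\<lambda>s. entropy (f s)) has_real_derivative K * (order_param (\<mu> t))\<^sup>2) (at t)) \<and>
           mono (\<lambda>t. entropy (f t))"
proof -
  interpret kuramoto_flow K f0 \<Theta> \<mu>
    by (unfold_locales; rule assms)
  show ?thesis
  proof (intro exI conjI allI)
    fix t
    show "dens t \<in> borel_measurable lborel" "\<mu> t = density lborel (\<lambda>x. ennreal (dens t x))"
      "integrable lborel (\<lambda>x. dens t x * ln (dens t x))"
      "((\<lambda>s. entropy (dens s)) has_real_derivative K * (order_param (\<mu> t))\<^sup>2) (at t)"
      using dens_meas \<mu>_density integrable_dens_ln_dens entropy_deriv by simp_all
    show "dens t x \<ge> 0" "x \<notin> Tstrip \<longrightarrow> dens t x = 0" for x
      using dens_nonneg dens_supp by simp_all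
  qed (rule entropy_mono)
qed

end
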